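(* Let $G=(V,E)$ be a finite, undirected, connected graph with $V=\{1,\dots,N\}$ and neighbourhoods $N(i)$. For $t\ge0$ and $j\in N(i)$ let $m_{ij}(t)\ge0$ be the transition rates of a reference process, set $m_{ii}(t)=-\sum_{j\in N(i)}m_{ij}(t)$ (so the reference process is mass-preserving), and let the reference marginal evolve by $\frac{d}{dt}\tilde\rho_i=\sum_{j\in N(i)}\big(m_{ji}\tilde\rho_j-m_{ij}\tilde\rho_i\big)$. Assume the reference process possesses a stationary measure $\rho^*$, i.e. $\rho^*$ is a probability vector with $\rho^*_i>0$ for all $i$ and $\sum_{j\in N(i)}\big(m_{ji}(t)\rho^*_j-m_{ij}(t)\rho^*_i\big)=0$ for all $i\in V$ and $t\ge0$. Consider the Hamiltonian system on $\{\rho\in\mathbb R^N:\rho_i>0\}\times\mathbb R^N$ $$\frac{\partial S_i}{\partial t}=-m_{ii}-\frac12\sum_{j\in N(i)}e^{S_j-S_i}m_{ij}\frac{\sqrt{\rho_j}}{\sqrt{\rho_i}}-\frac12\sum_{j\in N(i)}e^{S_i-S_j}m_{ji}\frac{\sqrt{\rho_j}}{\sqrt{\rho_i}},$$ $$\frac{\partial\rho_i}{\partial t}=\sum_{j\in N(i)}e^{S_i-S_j}m_{ji}\sqrt{\rho_j\rho_i}-\sum_{j\in N(i)}e^{S_j-S_i}m_{ij}\sqrt{\rho_i\rho_j},\qquad i\in V.$$ Then there exists $S^*\in\mathbb R^N$ such that $(\rho^*,S^* )$ is a stationary point of this system, i.e. the constant pair $(\rho(t),S(t))\equiv(\rho^*,S^*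 )$ is a solution.
   Context: This system is the Hamiltonian system $\partial_t\rho=\partial_S\tilde{\mathcal H}$, $\partial_tS=-\partial_\rho\tilde{\mathcal H}$ with Hamiltonian $\tilde{\mathcal H}(\rho,S)=\sum_{i\in V}\sum_{j\in N(i)}e^{S_j-S_i}m_{ij}\sqrt{\rho_i\rho_j}$ (using $m_{ii}=-\sum_{j\in N(i)}m_{ij}$), obtained from the critical point equations of the discrete Schrödinger bridge problem (relative entropy with respect to the reference process) via the change of variables $S=\psi-\frac12\ln\rho$. *)

theory Defs
  imports Complex_Main
begin

text \<open>Graph: vertex set is a finite type 'v (playing the role of {1..N});
  E is the (symmetric, irreflexive) edge relation, N(i) = {j. E i j}.
  Rates: m t i j = m_ij(t).\<close>

definition nbhd :: "('v \<Rightarrow> 'v \<Rightarrow> bool) \<Rightarrow> 'v \<Rightarrow> 'v set" where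
  "nbhd E i = {j. E i j}"

definition undirected_connected_graph :: "('v::finite \<Rightarrow> 'v \<Rightarrow> bool) \<Rightarrow> bool" where
  "undirected_connected_graph E \<longleftrightarrow>
     (\<forall>i j. E i j \<longrightarrow> E j i) \<and> (\<forall>i. \<not> E i i) \<and> (\<forall>i j. E\<^sup>*\<^sup>* i j)"

definition mdiag :: "('v \<Rightarrow> 'v \<Rightarrow> bool) \<Rightarrow> (real \<Rightarrow> 'v \<Rightarrow> 'v \<Rightarrow> real) \<Rightarrow> real \<Rightarrow> 'v \<Rightarrow> real" where
  "mdiag E m t i = - (\<Sum>j\<in>nbhd E i. m t i j)"

definition dS_rhs :: "('v::finite \<Rightarrow> 'v \<Rightarrow> bool) \<Rightarrow> (real \<Rightarrow> 'v \<Rightarrow> 'v \<Rightarrow> real)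
    \<Rightarrow> real \<Rightarrow> ('v \<Rightarrow> real) \<Rightarrow> ('v \<Rightarrow> real) \<Rightarrow> 'v \<Rightarrow> real" where
  "dS_rhs E m t \<rho> S i =
     - mdiag E m t i
     - 1/2 * (\<Sum>j\<in>nbhd E i. exp (S j - S i) * m t i j * sqrt (\<rho> j) / sqrt (\<rho> i))
     - 1/2 * (\<Sum>j\<in>nbhd E i. exp (S i - S j) * m t j i * sqrt (\<rho> j) / sqrt (\<rho> i))"

definition drho_rhs :: "('v::finite \<Rightarrow> 'v \<Rightarrow> bool) \<Rightarrow> (real \<Rightarrow> 'v \<Rightarrow> 'v \<Rightarrow> real)
    \<Rightarrow> real \<Rightarrow> ('v \<Rightarrow> real) \<Rightarrow> ('v \<Rightarrow> real) \<Rightarrow> 'v \<Rightarrow> real" where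
  "drho_rhs E m t \<rho> S i =
     (\<Sum>j\<in>nbhd E i. exp (S i - S j) * m t j i * sqrt (\<rho> j * \<rho> i))
     - (\<Sum>j\<in>nbhd E i. exp (S j - S i) * m t i j * sqrt (\<rho> i * \<rho> j))"

definition ham_solution :: "('v::finite \<Rightarrow> 'v \<Rightarrow> bool) \<Rightarrow> (real \<Rightarrow> 'v \<Rightarrow> 'v \<Rightarrow> real)
    \<Rightarrow> (real \<Rightarrow> 'v \<Rightarrow> real) \<Rightarrow> (real \<Rightarrow> 'v \<Rightarrow> real) \<Rightarrow> bool" where
  "ham_solution E m \<rho> S \<longleftrightarrow>
     (\<forall>t\<ge>0. \<forall>i. 0 < \<rho> t i
        \<and> ((\<lambda>s. \<rho> s i) has_real_derivative drho_rhs E m t (\<rho> t) (S t) i) (at t within {0..})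
        \<and> ((\<lambda>s. S s i) has_real_derivative dS_rhs E m t (\<rho> t) (S t) i) (at t within {0..}))"

end

theory Submission
  imports Defs
begin

text \<open>Take \<open>S* = -ln \<rho>* / 2\<close>, i.e. a constant potential \<open>\<psi>\<close> in \<open>S = \<psi> - ln \<rho> / 2\<close>.
  Then \<open>exp (S j - S i) = sqrt (\<rho> i) / sqrt (\<rho> j)\<close>, so both right-hand sides of the
  Hamiltonian system collapse to multiples of the right-hand side of the reference master
  equation at \<open>\<rho>*\<close>, which vanishes because \<open>\<rho>*\<close> is stationary.\<close>

definition master_rhs :: "('v \<Rightarrow> 'v \<Rightarrow> bool) \<Rightarrow> (real \<Rightarrow> 'v \<Rightarrow> 'v \<Rightarrow> real)
    \<Rightarrow> real \<Rightarrow> ('v \<Rightarrow> real) \<Rightarrow> 'v \<Rightarrow> real" where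
  "master_rhs E m t \<rho> i = (\<Sum>j\<in>nbhd E i. m t j i * \<rho> j - m t i j * \<rho> i)"

definition half_log_potential :: "('v \<Rightarrow> real) \<Rightarrow> 'v \<Rightarrow> real" where
  "half_log_potential \<rho> i = - ln (\<rho> i) / 2"

lemma exp_half_log_potential_diff:
  assumes "\<rho> i > 0" "\<rho> j > 0"
  shows "exp (half_log_potential \<rho> i - half_log_potential \<rho> j) = sqrt (\<rho> j) / sqrt (\<rho> i)"
proof -
  have "exp (half_log_potential \<rho> i - half_log_potential \<rho> j)
      = exp (ln (\<rho> j) / 2) / exp (ln (\<rho> i) / 2)"
    by (simp add: half_log_potential_def exp_diff[symmetric] algebra_simps)
  also have "\<dots> = \<rho> j powr (1/2) / \<rho> i powr (1/2)"
    using assms by (simp add: powr_def)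
  also have "\<dots> = sqrt (\<rho> j) / sqrt (\<rho> i)"
    using assms by (simp add: powr_half_sqrt)
  finally show ?thesis .
qed

lemma drho_rhs_half_log_potential:
  assumes pos: "\<And>i. \<rho> i > 0"
  shows "drho_rhs E m t \<rho> (half_log_potential \<rho>) i = master_rhs E m t \<rho> i"
proof -
  have sqrt_pos: "sqrt (\<rho> k) > 0" for k
    using pos by simp
  have inflow: "exp (half_log_potential \<rho> i - half_log_potential \<rho> j) * m t j i * sqrt (\<rho> j * \<rho> i)
      = m t j i * \<rho> j" for j
    using sqrt_pos[of i] sqrt_pos[of j] pos[of i] pos[of j]
    by (simp add: exp_half_log_potential_diff real_sqrt_mult field_simps)
  have outflow: "exp (half_log_potential \<rho> j - half_log_potential \<rho> i) * m t i j * sqrt (\<rho> i * \<rho> j)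
      = m t i j * \<rho> i" for j
    using sqrt_pos[of i] sqrt_pos[of j] pos[of i] pos[of j]
    by (simp add: exp_half_log_potential_diff real_sqrt_mult field_simps)
  show ?thesis
    unfolding drho_rhs_def master_rhs_def inflow outflow by (simp add: sum_subtractf)
qed

lemma dS_rhs_half_log_potential:
  assumes pos: "\<And>i. \<rho> i > 0"
  shows "dS_rhs E m t \<rho> (half_log_potential \<rho>) i = - master_rhs E m t \<rho> i / (2 * \<rho> i)"
proof -
  have sqrt_pos: "sqrt (\<rho> k) > 0" for k
    using pos by simp
  have outflow: "exp (half_log_potential \<rho> j - half_log_potential \<rho> i) * m t i j
      * sqrt (\<rho> j) / sqrt (\<rho> i) = m t i j" for j
    using sqrt_pos[of i] sqrt_pos[of j] pos[of i] pos[of j]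
    by (simp add: exp_half_log_potential_diff field_simps)
  have inflow: "exp (half_log_potential \<rho> i - half_log_potential \<rho> j) * m t j i
      * sqrt (\<rho> j) / sqrt (\<rho> i) = m t j i * \<rho> j / \<rho> i" for j
    using sqrt_pos[of i] sqrt_pos[of j] pos[of i] pos[of j]
    by (simp add: exp_half_log_potential_diff field_simps real_sqrt_mult_self)
  show ?thesis
    unfolding dS_rhs_def mdiag_def master_rhs_def outflow inflow
    using pos[of i]
    by (simp add: sum_divide_distrib[symmetric] sum_distrib_left sum_subtractf field_simps)
qed

lemma ham_solution_const:
  assumes "\<And>i. 0 < \<rho> i"
    and "\<And>t i. t \<ge> 0 \<Longrightarrow> drho_rhs E m t \<rho> S i = 0"
    and "\<And>t i. t \<ge> 0 \<Longrightarrow> dS_rhs E m t \<rho> S i = 0"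
  shows "ham_solution E m (\<lambda>t. \<rho>) (\<lambda>t. S)"
  unfolding ham_solution_def using assms by simp

theorem mainTheorem3:
  fixes E :: "'v::finite \<Rightarrow> 'v \<Rightarrow> bool"
    and m :: "real \<Rightarrow> 'v \<Rightarrow> 'v \<Rightarrow> real"
    and \<rho>s :: "'v \<Rightarrow> real"
  assumes graph: "undirected_connected_graph E"
    and rates_nonneg: "\<And>t i j. t \<ge> 0 \<Longrightarrow> j \<in> nbhd E i \<Longrightarrow> m t i j \<ge> 0"
    and stat_pos: "\<And>i. \<rho>s i > 0"
    and stat_prob: "(\<Sum>i\<in>UNIV. \<rho>s i) = 1"
    and stat_bal: "\<And>t i. t \<ge> 0 \<Longrightarrow>
         (\<Sum>j\<in>nbhd E i. m t j i * \<rho>s j - m t i j * \<rho>s i) = 0"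
  shows "\<exists>Ss :: 'v \<Rightarrow> real. ham_solution E m (\<lambda>t. \<rho>s) (\<lambda>t. Ss)"
proof
  have stationary: "master_rhs E m t \<rho>s i = 0" if "t \<ge> 0" for t i
    unfolding master_rhs_def using stat_bal[OF that] .
  show "ham_solution E m (\<lambda>t. \<rho>s) (\<lambda>t. half_log_potential \<rho>s)"
    using stat_pos stationary
    by (intro ham_solution_const)
      (simp_all add: drho_rhs_half_log_potential dS_rhs_half_log_potential)
qed

end
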